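(* Let $\Pi_1=\{w\in\mathbb C^2:\operatorname{Im}(w_1+w_2)=0\}$ and $\Pi_2=\{w\in\mathbb C^2:\operatorname{Im}(w_1-w_2)=0\}$, and let $F(w_1,w_2)=(w_1,w_2^2)$. Then $F^{-1}(\Gamma)=\Pi_1\cup\Pi_2$ where $\Gamma=\{\operatorname{Im}(z_1+\sqrt{z_2})=0\}\cup\{\operatorname{Im}(z_1-\sqrt{z_2})=0\}$, and every neighbourhood of $0$ in $\mathbb C^2$ contains a neighbourhood of $0$ that is filled by a continuous family of holomorphic discs with boundaries in $\Pi_1\cup\Pi_2$, contracting to $0$.
   Context: A holomorphic disc is a map from the closed unit disc continuous up to the boundary and holomorphic in the interior; its boundary is the image of the unit circle. *)

theory Defs
  imports "HOL-Analysis.Analysis"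
begin

definition Pi1 :: "(complex \<times> complex) set" where
  "Pi1 = {w. Im (fst w + snd w) = 0}"

definition Pi2 :: "(complex \<times> complex) set" where
  "Pi2 = {w. Im (fst w - snd w) = 0}"

definition Fmap :: "complex \<times> complex \<Rightarrow> complex \<times> complex" where
  "Fmap w = (fst w, (snd w)\<^sup>2)"

text \<open>Gamma, using the principal square root; both signs are taken, so the
  choice of branch of the square root is immaterial.\<close>
definition Gamma :: "(complex \<times> complex) set" where
  "Gamma = {z. Im (fst z + csqrt (snd z)) = 0} \<union> {z. Im (fst z - csqrt (snd z)) = 0}"

definition holo_disc :: "(complex \<Rightarrow> complex \<times> complex) \<Rightarrow> bool" where
  "holo_disc f \<longleftrightarrow> continuous_on (cball 0 1) f
      \<and> (\<lambda>z. fst (f z)) holomorphic_on ball 0 1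
      \<and> (\<lambda>z. snd (f z)) holomorphic_on ball 0 1"

text \<open>V is filled by a continuous family of holomorphic discs (parametrised by a
  path-connected parameter set P) with boundaries in E, which contracts to 0:
  the union of the discs is exactly V, the family depends continuously on the
  parameter and the disc variable jointly, and the family contains the constant
  disc at 0 (so every disc can be deformed within the family to the point 0).\<close>
definition filled_by_contracting_discs ::
    "(complex \<times> complex) set \<Rightarrow> (complex \<times> complex) set \<Rightarrow> bool" where
  "filled_by_contracting_discs V E \<longleftrightarrow>
     (\<exists>(P :: (complex \<times> complex) set) (\<Phi> :: (complex \<times> complex) \<Rightarrow> complex \<Rightarrow> complex \<times> complex) p0.
        path_connected P \<and> p0 \<in> P \<and>
        continuous_on (P \<times> cball 0 1) (\<lambda>(p, \<zeta>). \<Phi> p \<zeta>) \<and>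
        (\<forall>p\<in>P. holo_disc (\<Phi> p)) \<and>
        (\<forall>p\<in>P. \<Phi> p ` sphere 0 1 \<subseteq> E) \<and>
        (\<forall>\<zeta>\<in>cball 0 1. \<Phi> p0 \<zeta> = 0) \<and>
        V = (\<Union>p\<in>P. \<Phi> p ` cball 0 1))"

end

theory Submission
  imports Defs
begin

text \<open>
  In the coordinates \<open>u = w\<^sub>1 + w\<^sub>2\<close>, \<open>v = w\<^sub>1 - w\<^sub>2\<close> the planes are
  \<open>Pi1 = {Im u = 0}\<close> and \<open>Pi2 = {Im v = 0}\<close>. A function \<open>\<sigma>\<close> (\<open>arc_map\<close>), holomorphic
  in the unit disc and continuous up to its boundary, is real on the upper half of the unit
  circle and nonreal inside the disc. The discs \<open>u = a + b \<sigma>(\<zeta>)\<close>, \<open>v = c + d \<sigma>(-\<zeta>)\<close> with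
  real \<open>a, b, c, d\<close> then have their boundaries in \<open>Pi1 \<union> Pi2\<close>, and the parameter
  \<open>(a, b, c, d) = 0\<close> gives the constant disc at 0. For fixed \<open>\<zeta>\<close> inside the disc,
  \<open>(a, b, c, d) \<mapsto> (u, v)\<close> is a real linear isomorphism, so the union of the discs over a
  small convex open parameter set is open: a point on a boundary circle is also reached, with
  nearby parameters, from a slightly smaller \<open>\<zeta>\<close>.

  For the first claim, \<open>csqrt (w\<^sub>2\<^sup>2) = \<plusminus>w\<^sub>2\<close> turns the two halves of \<open>Gamma\<close> into
  \<open>Pi1\<close> and \<open>Pi2\<close>.
\<close>

lemma continuous_on_csqrt_insert_0: "continuous_on (insert 0 (-\<real>\<^sub>\<le>\<^sub>0)) csqrt"
proof -
  have "isCont (\<lambda>z. sqrt (norm z)) (0::complex)"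
    by (intro continuous_intros)
  then have "((\<lambda>z. norm (csqrt z)) \<longlongrightarrow> 0) (at 0)"
    by (simp add: isCont_def)
  then have "isCont csqrt 0"
    unfolding isCont_def by (simp add: tendsto_norm_zero_cancel)
  then have "isCont csqrt z" if "z \<in> insert 0 (-\<real>\<^sub>\<le>\<^sub>0)" for z
    using that continuous_at_csqrt[of z] by blast
  then show ?thesis
    by (intro continuous_at_imp_continuous_on) blast
qed

lemma csqrt_of_real_mult: "t \<ge> 0 \<Longrightarrow> csqrt (of_real t * z) = of_real (sqrt t) * csqrt z"
  using csqrt_mult[of "of_real t" z] mpi_less_Arg[of z] Arg_le_pi[of z] by (simp add: csqrt_of_real)

lemma Im_eq_0_if_norm_le_abs_Re:
  assumes "norm z \<le> \<bar>Re z\<bar>"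
  shows "Im z = 0"
proof -
  have "(Re z)\<^sup>2 + (Im z)\<^sup>2 \<le> \<bar>Re z\<bar>\<^sup>2"
    using power_mono[OF assms norm_ge_zero, of 2] by (simp add: cmod_power2)
  then show ?thesis
    by simp
qed

lemma abs_Im_csqrt_le_Re: "Re w \<ge> 0 \<Longrightarrow> \<bar>Im (csqrt w)\<bar> \<le> Re (csqrt w)"
proof -
  assume "Re w \<ge> 0"
  moreover have "Re w = (Re (csqrt w))\<^sup>2 - (Im (csqrt w))\<^sup>2"
    by (metis Re_power2 power2_csqrt)
  ultimately show ?thesis
    by (metis Re_csqrt abs_le_square_iff abs_of_nonneg diff_ge_0_iff_ge)
qed

lemma norm_power2_le_2_norm_add_power2:
  assumes "Re a \<ge> 0" "Re b \<ge> 0" "\<bar>Im b\<bar> \<le> Re b"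
  shows "(norm a)\<^sup>2 \<le> 2 * (norm (a + b))\<^sup>2"
proof -
  have "(Im b)\<^sup>2 \<le> (Re b)\<^sup>2"
    using assms(2,3) by (simp add: abs_le_square_iff[symmetric])
  then have "0 \<le> (Im a + 2 * Im b)\<^sup>2 + 4 * Re a * Re b + (Re a)\<^sup>2 + 2 * ((Re b)\<^sup>2 - (Im b)\<^sup>2)"
    using assms(1,2) by simp
  also have "\<dots> = 2 * (norm (a + b))\<^sup>2 - (norm a)\<^sup>2"
    unfolding cmod_power2 by (simp add: power2_eq_square algebra_simps)
  finally show ?thesis by simp
qed

text \<open>On the upper unit semicircle \<open>\<i> (1 - z)\<close> is a nonnegative multiple of \<open>1 + z\<close>, so
  the two square roots are proportional and the quotient is real.\<close>

definition arc_map :: "complex \<Rightarrow> complex" where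
  "arc_map z = csqrt (\<i> * (1 - z)) / (csqrt (\<i> * (1 - z)) + csqrt (1 + z))"

lemma arc_map_denom_nonzero: "csqrt (\<i> * (1 - z)) + csqrt (1 + z) \<noteq> 0"
proof
  define a b where "a = csqrt (\<i> * (1 - z))" and "b = csqrt (1 + z)"
  assume "csqrt (\<i> * (1 - z)) + csqrt (1 + z) = 0"
  then have "a = - b" unfolding a_def b_def by (simp add: eq_neg_iff_add_eq_0)
  then have "Re b = 0"
    using Re_csqrt[of "\<i> * (1 - z)"] Re_csqrt[of "1 + z"] by (simp add: a_def b_def)
  have "Im z = Im (b\<^sup>2)"
    by (simp add: b_def)
  also have "\<dots> = 2 * Re b * Im b"
    by (simp add: power2_eq_square)
  finally have "Im z = 0"
    using \<open>Re b = 0\<close> by simp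
  have "a\<^sup>2 = b\<^sup>2"
    using \<open>a = - b\<close> by simp
  then have "\<i> * (1 - z) = 1 + z"
    by (simp add: a_def b_def)
  with \<open>Im z = 0\<close> show False
    by (auto simp: complex_eq_iff)
qed

lemma continuous_on_arc_map: "continuous_on (cball 0 1) arc_map"
proof -
  have domain: "\<i> * (1 - z) \<in> insert 0 (-\<real>\<^sub>\<le>\<^sub>0)" "1 + z \<in> insert 0 (-\<real>\<^sub>\<le>\<^sub>0)"
    if "z \<in> cball 0 1" for z
  proof -
    have "norm z \<le> 1" "\<bar>Re z\<bar> \<le> 1"
      using that abs_Re_le_cmod[of z] by auto
    then have real: "Im z = 0" if "\<bar>Re z\<bar> = 1"
      using that by (intro Im_eq_0_if_norm_le_abs_Re) simp
    show "\<i> * (1 - z) \<in> insert 0 (-\<real>\<^sub>\<le>\<^sub>0)"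
    proof (cases "Re z = 1")
      case True
      then have "z = 1"
        using real by (simp add: complex_eq_iff)
      then show ?thesis by simp
    qed (simp add: complex_nonpos_Reals_iff)
    show "1 + z \<in> insert 0 (-\<real>\<^sub>\<le>\<^sub>0)"
    proof (cases "Re z = -1")
      case True
      then have "z = -1"
        using real by (simp add: complex_eq_iff)
      then show ?thesis by simp
    qed (use \<open>\<bar>Re z\<bar> \<le> 1\<close> in \<open>auto simp: complex_nonpos_Reals_iff\<close>)
  qed
  have "continuous_on (cball 0 1) (\<lambda>z. csqrt (\<i> * (1 - z)))"
    by (rule continuous_on_compose2[OF continuous_on_csqrt_insert_0])
      (intro continuous_intros, use domain in blast)
  moreover have "continuous_on (cball 0 1) (\<lambda>z. csqrt (1 + z))"
    by (rule continuous_on_compose2[OF continuous_on_csqrt_insert_0])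
      (intro continuous_intros, use domain in blast)
  ultimately show ?thesis
    unfolding arc_map_def by (intro continuous_intros) (simp_all add: arc_map_denom_nonzero)
qed

lemma holomorphic_on_arc_map: "arc_map holomorphic_on ball 0 1"
proof -
  have "\<i> * (1 - z) \<notin> \<real>\<^sub>\<le>\<^sub>0" "1 + z \<notin> \<real>\<^sub>\<le>\<^sub>0" if "z \<in> ball 0 1" for z
    using that abs_Re_le_cmod[of z] by (auto simp: complex_nonpos_Reals_iff)
  then show ?thesis
    unfolding arc_map_def by (intro holomorphic_intros arc_map_denom_nonzero) auto
qed

lemma Im_arc_map_upper_arc:
  assumes "norm z = 1" "Im z \<ge> 0"
  shows "Im (arc_map z) = 0"
proof (cases "z = -1")
  case True
  then show ?thesis by (simp add: arc_map_def)
next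
  case False
  have "Re z > -1"
  proof (rule ccontr)
    assume "\<not> Re z > -1"
    then have "Im z = 0"
      using assms(1) by (intro Im_eq_0_if_norm_le_abs_Re) linarith
    moreover have "Re z = -1"
      using \<open>\<not> Re z > -1\<close> abs_Re_le_cmod[of z] assms(1) by linarith
    ultimately show False
      using False by (simp add: complex_eq_iff)
  qed
  define t where "t = Im z / (1 + Re z)"
  have "t \<ge> 0"
    using assms(2) \<open>Re z > -1\<close> by (simp add: t_def)
  have "(Re z)\<^sup>2 + (Im z)\<^sup>2 = 1"
    using assms(1) by (simp add: cmod_power2[symmetric])
  then have "Im z * Im z = (1 - Re z) * (1 + Re z)"
    by (simp add: power2_eq_square algebra_simps)
  then have "\<i> * (1 - z) = of_real t * (1 + z)"
    using \<open>Re z > -1\<close> by (intro complex_eqI) (simp_all add: t_def field_simps)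
  then have "csqrt (\<i> * (1 - z)) = of_real (sqrt t) * csqrt (1 + z)"
    using csqrt_of_real_mult[OF \<open>t \<ge> 0\<close>] by simp
  then have "arc_map z = (of_real (sqrt t) * csqrt (1 + z)) / ((of_real (sqrt t) + 1) * csqrt (1 + z))"
    by (simp add: arc_map_def distrib_right)
  also have "\<dots> = of_real (sqrt t) / (of_real (sqrt t) + 1)"
    using False by (intro mult_divide_mult_cancel_right) (simp add: add_eq_0_iff)
  also have "\<dots> = of_real (sqrt t / (sqrt t + 1))"
    by simp
  finally show ?thesis
    by (simp only: Im_complex_of_real)
qed

lemma Im_arc_map_nonzero:
  assumes "norm z < 1"
  shows "Im (arc_map z) \<noteq> 0"
proof
  define a b where "a = csqrt (\<i> * (1 - z))" and "b = csqrt (1 + z)"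
  define c where "c = Re (arc_map z)"
  assume "Im (arc_map z) = 0"
  then have "arc_map z = of_real c"
    by (simp add: complex_eq_iff c_def)
  then have "a = of_real c * (a + b)"
    using arc_map_denom_nonzero[of z] unfolding arc_map_def a_def[symmetric] b_def[symmetric]
    by (simp add: divide_eq_eq)
  then have "of_real c * b = (1 - of_real c) * a"
    by (simp add: algebra_simps)
  moreover have "a \<noteq> 0"
    using assms by (auto simp: a_def)
  ultimately have "c \<noteq> 0"
    by auto
  with \<open>of_real c * b = (1 - of_real c) * a\<close> have b_multiple: "b = of_real ((1 - c) / c) * a"
    by (simp add: field_simps)
  define k where "k = ((1 - c) / c)\<^sup>2"
  have proportional: "1 + z = of_real k * (\<i> * (1 - z))"
    using b_multiple unfolding a_def b_def k_def by (metis of_real_power power2_csqrt power_mult_distrib)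
  have "1 + Re z = k * Im z"
    using arg_cong[OF proportional, of Re] by simp
  moreover have "Im z = k * (1 - Re z)"
    using arg_cong[OF proportional, of Im] by simp
  ultimately have "(1 + Re z) * (1 - Re z) = Im z * Im z"
    by (metis mult.assoc mult.commute)
  then have "(Re z)\<^sup>2 + (Im z)\<^sup>2 = 1"
    by (simp add: power2_eq_square algebra_simps)
  then have "norm z = 1"
    by (simp add: cmod_def)
  then show False
    using assms by simp
qed

lemma norm_arc_map_le:
  assumes "norm z \<le> 1"
  shows "norm (arc_map z) \<le> 2"
proof -
  define a b where "a = csqrt (\<i> * (1 - z))" and "b = csqrt (1 + z)"
  have "Re (1 + z) \<ge> 0"
    using assms abs_Re_le_cmod[of z] by simp
  then have "(norm a)\<^sup>2 \<le> 2 * (norm (a + b))\<^sup>2"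
    unfolding a_def b_def by (intro norm_power2_le_2_norm_add_power2 Re_csqrt abs_Im_csqrt_le_Re)
  also have "\<dots> \<le> (2 * norm (a + b))\<^sup>2"
    by (simp add: power_mult_distrib)
  finally have "norm a \<le> 2 * norm (a + b)"
    by (rule power2_le_imp_le) simp
  moreover have "a + b \<noteq> 0"
    unfolding a_def b_def by (rule arc_map_denom_nonzero)
  moreover have "norm (arc_map z) = norm a / norm (a + b)"
    by (simp add: arc_map_def a_def b_def norm_divide)
  ultimately show ?thesis
    by (simp add: divide_le_eq)
qed

lemma tendsto_arc_map:
  assumes "(f \<longlongrightarrow> z) F" "norm z \<le> 1" "\<forall>\<^sub>F x in F. norm (f x) \<le> 1"
  shows "((\<lambda>x. arc_map (f x)) \<longlongrightarrow> arc_map z) F"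
  using continuous_on_tendsto_compose[OF continuous_on_arc_map assms(1)] assms(2,3) by simp

definition norm1 :: "complex \<Rightarrow> real" where
  "norm1 q = \<bar>Re q\<bar> + \<bar>Im q\<bar>"

text \<open>A complex number \<open>q\<close> stores the two real coefficients of \<open>\<tau> \<mapsto> a + b \<tau>\<close>; the factor
  \<open>1/2\<close> gives \<open>norm (real_affine q \<tau>) \<le> norm1 q\<close> on the range \<open>norm \<tau> \<le> 2\<close> of \<open>arc_map\<close>.\<close>

definition real_affine :: "complex \<Rightarrow> complex \<Rightarrow> complex" where
  "real_affine q \<tau> = of_real (Re q) + of_real (Im q / 2) * \<tau>"

definition real_affine_coeffs :: "complex \<Rightarrow> complex \<Rightarrow> complex" where
  "real_affine_coeffs \<tau> c = Complex (Re c - Im c * Re \<tau> / Im \<tau>) (2 * Im c / Im \<tau>)"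

lemma Re_real_affine [simp]: "Re (real_affine q \<tau>) = Re q + Im q / 2 * Re \<tau>"
  and Im_real_affine [simp]: "Im (real_affine q \<tau>) = Im q / 2 * Im \<tau>"
  by (simp_all add: real_affine_def)

lemma real_affine_real_affine_coeffs:
  "Im \<tau> \<noteq> 0 \<Longrightarrow> real_affine (real_affine_coeffs \<tau> c) \<tau> = c"
  by (simp add: complex_eq_iff real_affine_coeffs_def field_simps)

lemma real_affine_coeffs_real_affine:
  "Im \<tau> \<noteq> 0 \<Longrightarrow> real_affine_coeffs \<tau> (real_affine q \<tau>) = q"
  by (simp add: complex_eq_iff real_affine_coeffs_def field_simps)

lemma norm_real_affine_le:
  assumes "norm \<tau> \<le> 2"
  shows "norm (real_affine q \<tau>) \<le> norm1 q"
proof -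
  have "norm (real_affine q \<tau>) \<le> \<bar>Re q\<bar> + \<bar>Im q\<bar> / 2 * norm \<tau>"
    using norm_triangle_ineq[of "of_real (Re q)" "of_real (Im q / 2) * \<tau>"]
    by (simp add: real_affine_def norm_mult)
  also have "\<dots> \<le> norm1 q"
    using assms mult_left_mono[OF assms, of "\<bar>Im q\<bar> / 2"] by (simp add: norm1_def)
  finally show ?thesis .
qed

lemma convex_norm1_less: "convex {q. norm1 q < e}"
proof (rule convexI)
  fix a b :: complex and u v :: real
  assume "a \<in> {q. norm1 q < e}" "b \<in> {q. norm1 q < e}" "0 \<le> u" "0 \<le> v" "u + v = 1"
  moreover have "norm1 (u *\<^sub>R a + v *\<^sub>R b) \<le> u * norm1 a + v * norm1 b"
    using \<open>0 \<le> u\<close> \<open>0 \<le> v\<close> abs_triangle_ineq[of "u * Re a" "v * Re b"]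
      abs_triangle_ineq[of "u * Im a" "v * Im b"]
    by (simp add: norm1_def abs_mult algebra_simps)
  ultimately show "u *\<^sub>R a + v *\<^sub>R b \<in> {q. norm1 q < e}"
    using convex_bound_lt[of "norm1 a" e "norm1 b" u v] by simp
qed

lemma open_norm1_less: "open {q. norm1 q < e}"
  unfolding norm1_def by (intro open_Collect_less continuous_intros)

lemma eventually_real_affine_eq:
  assumes "(g \<longlongrightarrow> \<tau>) F" "norm \<tau> \<le> 2" "norm1 q < e" "\<forall>\<^sub>F x in F. Im (g x) \<noteq> 0"
  shows "\<forall>\<^sub>F x in F. \<exists>q'. norm1 q' < e \<and> real_affine q' (g x) = real_affine q \<tau>"
proof (cases "Im \<tau> = 0")
  case True
  define c where "c = Re (real_affine q \<tau>)"
  have "real_affine q \<tau> = of_real c"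
    using True by (simp add: complex_eq_iff c_def)
  moreover have "norm1 (of_real c) < e"
    using abs_Re_le_cmod[of "real_affine q \<tau>"] norm_real_affine_le[OF assms(2), of q] assms(3)
    by (simp add: norm1_def c_def)
  moreover have "real_affine (of_real c) \<tau>' = of_real c" for \<tau>'
    by (simp add: real_affine_def)
  ultimately show ?thesis
    by (intro always_eventually) metis
next
  case False
  let ?c = "real_affine q \<tau>"
  have "((\<lambda>x. norm1 (real_affine_coeffs (g x) ?c)) \<longlongrightarrow> norm1 (real_affine_coeffs \<tau> ?c)) F"
    unfolding norm1_def real_affine_coeffs_def using False by (intro tendsto_intros assms(1)) simp_all
  moreover have "norm1 (real_affine_coeffs \<tau> ?c) = norm1 q"
    using False by (simp add: real_affine_coeffs_real_affine)
  ultimately have "\<forall>\<^sub>F x in F. norm1 (real_affine_coeffs (g x) ?c) < e"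
    using assms(3) by (simp add: order_tendstoD(2))
  with assms(4) show ?thesis
    by eventually_elim (use real_affine_real_affine_coeffs in blast)
qed

definition disc_family :: "complex \<times> complex \<Rightarrow> complex \<Rightarrow> complex \<times> complex" where
  "disc_family p \<zeta> =
     ((real_affine (fst p) (arc_map \<zeta>) + real_affine (snd p) (arc_map (- \<zeta>))) / 2,
      (real_affine (fst p) (arc_map \<zeta>) - real_affine (snd p) (arc_map (- \<zeta>))) / 2)"

definition disc_family_param :: "complex \<Rightarrow> complex \<times> complex \<Rightarrow> complex \<times> complex" where
  "disc_family_param \<zeta> w =
     (real_affine_coeffs (arc_map \<zeta>) (fst w + snd w),
      real_affine_coeffs (arc_map (- \<zeta>)) (fst w - snd w))"

definition disc_params :: "real \<Rightarrow> (complex \<times> complex) set" where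
  "disc_params e = {q. norm1 q < e} \<times> {q. norm1 q < e}"

lemma disc_family_add:
    "fst (disc_family p \<zeta>) + snd (disc_family p \<zeta>) = real_affine (fst p) (arc_map \<zeta>)"
  and disc_family_diff:
    "fst (disc_family p \<zeta>) - snd (disc_family p \<zeta>) = real_affine (snd p) (arc_map (- \<zeta>))"
  by (simp_all add: disc_family_def field_simps)

lemma disc_family_zero [simp]: "disc_family 0 \<zeta> = 0"
  by (simp add: disc_family_def real_affine_def zero_prod_def)

lemma disc_family_param_disc_family:
  "norm \<zeta> < 1 \<Longrightarrow> disc_family_param \<zeta> (disc_family p \<zeta>) = p"
  by (simp add: disc_family_param_def disc_family_add disc_family_diff Im_arc_map_nonzero
      real_affine_coeffs_real_affine)

lemma disc_family_disc_family_param: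
  assumes "norm \<zeta> < 1"
  shows "disc_family (disc_family_param \<zeta> w) \<zeta> = w"
proof -
  have "Im (arc_map \<zeta>) \<noteq> 0" "Im (arc_map (- \<zeta>)) \<noteq> 0"
    using assms by (simp_all add: Im_arc_map_nonzero)
  then show ?thesis
    by (simp add: disc_family_def disc_family_param_def real_affine_real_affine_coeffs prod_eq_iff
        field_simps)
qed

lemma continuous_on_disc_family: "continuous_on (P \<times> cball 0 1) (\<lambda>(p, \<zeta>). disc_family p \<zeta>)"
proof -
  have "continuous_on (P \<times> cball 0 1) (\<lambda>x. arc_map (snd x))"
    by (rule continuous_on_compose2[OF continuous_on_arc_map]) (auto intro!: continuous_intros)
  moreover have "continuous_on (P \<times> cball 0 1) (\<lambda>x. arc_map (- snd x))"
    by (rule continuous_on_compose2[OF continuous_on_arc_map]) (auto intro!: continuous_intros)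
  ultimately show ?thesis
    unfolding case_prod_unfold disc_family_def real_affine_def by (intro continuous_intros) simp_all
qed

lemma holo_disc_disc_family: "holo_disc (disc_family p)"
proof -
  have "continuous_on (cball 0 1) (\<lambda>\<zeta>. (\<lambda>(p, \<zeta>). disc_family p \<zeta>) (p, \<zeta>))"
    by (rule continuous_on_compose2[OF continuous_on_disc_family[of "{p}"]])
      (auto intro!: continuous_intros)
  moreover have "(\<lambda>\<zeta>. arc_map (- \<zeta>)) holomorphic_on ball 0 1"
    by (rule holomorphic_on_compose_gen[OF _ holomorphic_on_arc_map, unfolded o_def])
      (auto intro!: holomorphic_intros)
  ultimately show ?thesis
    unfolding holo_disc_def
    by (simp add: disc_family_def real_affine_def holomorphic_intros holomorphic_on_arc_map)
qed

lemma disc_family_sphere_subset: "disc_family p ` sphere 0 1 \<subseteq> Pi1 \<union> Pi2"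
proof
  fix w assume "w \<in> disc_family p ` sphere 0 1"
  then obtain \<zeta> where "norm \<zeta> = 1" and w: "w = disc_family p \<zeta>"
    by auto
  show "w \<in> Pi1 \<union> Pi2"
  proof (cases "Im \<zeta> \<ge> 0")
    case True
    then have "Im (arc_map \<zeta>) = 0"
      using \<open>norm \<zeta> = 1\<close> by (rule Im_arc_map_upper_arc[rotated])
    then have "Im (fst w + snd w) = 0"
      using disc_family_add[of p \<zeta>] by (simp add: w)
    then show ?thesis
      by (simp add: Pi1_def)
  next
    case False
    then have "Im (arc_map (- \<zeta>)) = 0"
      using \<open>norm \<zeta> = 1\<close> by (intro Im_arc_map_upper_arc) simp_all
    then have "Im (fst w - snd w) = 0"
      using disc_family_diff[of p \<zeta>] by (simp add: w)
    then show ?thesis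
      by (simp add: Pi2_def)
  qed
qed

lemma norm_disc_family_less:
  assumes "p \<in> disc_params e" "norm \<zeta> \<le> 1"
  shows "norm (disc_family p \<zeta>) < 2 * e"
proof -
  define u v where "u = real_affine (fst p) (arc_map \<zeta>)" and "v = real_affine (snd p) (arc_map (- \<zeta>))"
  have "norm (arc_map \<zeta>) \<le> 2" "norm (arc_map (- \<zeta>)) \<le> 2"
    using assms(2) by (simp_all add: norm_arc_map_le)
  then have "norm u \<le> norm1 (fst p)" "norm v \<le> norm1 (snd p)"
    unfolding u_def v_def by (simp_all add: norm_real_affine_le)
  moreover have "norm1 (fst p) < e" "norm1 (snd p) < e"
    using assms(1) by (auto simp: disc_params_def)
  ultimately have "norm u < e" "norm v < e"
    by linarith+
  have "norm (disc_family p \<zeta>) \<le> norm ((u + v) / 2) + norm ((u - v) / 2)"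
    unfolding disc_family_def u_def[symmetric] v_def[symmetric] by (rule norm_Pair_le)
  also have "\<dots> \<le> norm u + norm v"
    using norm_triangle_ineq[of u v] norm_triangle_ineq4[of u v] by (simp add: norm_divide)
  also have "\<dots> < 2 * e"
    using \<open>norm u < e\<close> \<open>norm v < e\<close> by simp
  finally show ?thesis .
qed

lemma open_disc_family_image:
  assumes "norm \<zeta> < 1"
  shows "open ((\<lambda>p. disc_family p \<zeta>) ` disc_params e)"
proof -
  have "(\<lambda>p. disc_family p \<zeta>) ` disc_params e = disc_family_param \<zeta> -` disc_params e"
  proof (intro set_eqI iffI)
    fix w assume "w \<in> (\<lambda>p. disc_family p \<zeta>) ` disc_params e"
    then show "w \<in> disc_family_param \<zeta> -` disc_params e"
      using disc_family_param_disc_family[OF assms] by auto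
  next
    fix w assume "w \<in> disc_family_param \<zeta> -` disc_params e"
    then show "w \<in> (\<lambda>p. disc_family p \<zeta>) ` disc_params e"
      using disc_family_disc_family_param[OF assms, of w] by (metis image_eqI vimageD)
  qed
  moreover have "open (disc_params e)"
    by (simp add: disc_params_def open_Times open_norm1_less)
  moreover have "continuous_on UNIV (disc_family_param \<zeta>)"
    unfolding disc_family_param_def real_affine_coeffs_def
    using assms by (intro continuous_intros) (simp_all add: Im_arc_map_nonzero)
  ultimately show ?thesis
    by (simp add: open_vimage)
qed

lemma disc_family_attained_inside:
  assumes "p \<in> disc_params e" "norm \<zeta> \<le> 1"
  obtains q \<zeta>' where "q \<in> disc_params e" "norm \<zeta>' < 1" "disc_family q \<zeta>' = disc_family p \<zeta>"
proof -
  define g where "g r = of_real r * \<zeta>" for r :: real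
  have "\<forall>\<^sub>F r in at_left 1. 0 < r \<and> r < (1::real)"
    using eventually_at_left_real[of 0 1] by simp
  then have inside: "\<forall>\<^sub>F r in at_left 1. norm (g r) < 1"
  proof eventually_elim
    case (elim r)
    then have "r * norm \<zeta> < 1"
      using mult_left_mono[OF assms(2), of r] by linarith
    then show ?case
      using elim by (simp add: g_def norm_mult)
  qed
  then have inside_le: "\<forall>\<^sub>F r in at_left 1. norm (g r) \<le> 1"
    "\<forall>\<^sub>F r in at_left 1. norm (- g r) \<le> 1"
    by (auto elim: eventually_mono)
  have "(g \<longlongrightarrow> \<zeta>) (at_left 1)"
    unfolding g_def by (auto intro!: tendsto_eq_intros)
  then have lim: "((\<lambda>r. arc_map (g r)) \<longlongrightarrow> arc_map \<zeta>) (at_left 1)"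
    "((\<lambda>r. arc_map (- g r)) \<longlongrightarrow> arc_map (- \<zeta>)) (at_left 1)"
    using assms(2) inside_le by (auto intro!: tendsto_arc_map tendsto_minus)
  have nonreal: "\<forall>\<^sub>F r in at_left 1. Im (arc_map (g r)) \<noteq> 0"
    "\<forall>\<^sub>F r in at_left 1. Im (arc_map (- g r)) \<noteq> 0"
    using inside by (auto elim!: eventually_mono simp: Im_arc_map_nonzero)
  have "norm1 (fst p) < e" "norm1 (snd p) < e"
    using assms(1) by (auto simp: disc_params_def)
  then have "\<forall>\<^sub>F r in at_left 1. \<exists>q1. norm1 q1 < e
      \<and> real_affine q1 (arc_map (g r)) = real_affine (fst p) (arc_map \<zeta>)"
    and "\<forall>\<^sub>F r in at_left 1. \<exists>q2. norm1 q2 < e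
      \<and> real_affine q2 (arc_map (- g r)) = real_affine (snd p) (arc_map (- \<zeta>))"
    using assms(2) by (simp_all add: eventually_real_affine_eq lim nonreal norm_arc_map_le)
  with inside have "\<forall>\<^sub>F r in at_left 1. norm (g r) < 1
      \<and> (\<exists>q1. norm1 q1 < e \<and> real_affine q1 (arc_map (g r)) = real_affine (fst p) (arc_map \<zeta>))
      \<and> (\<exists>q2. norm1 q2 < e \<and> real_affine q2 (arc_map (- g r)) = real_affine (snd p) (arc_map (- \<zeta>)))"
    by eventually_elim blast
  then obtain r q1 q2 where "norm (g r) < 1" "norm1 q1 < e" "norm1 q2 < e"
    "real_affine q1 (arc_map (g r)) = real_affine (fst p) (arc_map \<zeta>)"
    "real_affine q2 (arc_map (- g r)) = real_affine (snd p) (arc_map (- \<zeta>))"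
    using eventually_happens'[OF trivial_limit_at_left_real] by blast
  then show ?thesis
    by (intro that[of "(q1, q2)" "g r"]) (simp_all add: disc_params_def disc_family_def)
qed

definition disc_neighbourhood :: "real \<Rightarrow> (complex \<times> complex) set" where
  "disc_neighbourhood e = (\<Union>p\<in>disc_params e. disc_family p ` cball 0 1)"

lemma open_disc_neighbourhood: "open (disc_neighbourhood e)"
proof -
  have "disc_neighbourhood e = (\<Union>\<zeta>\<in>ball 0 1. (\<lambda>p. disc_family p \<zeta>) ` disc_params e)"
  proof (intro subset_antisym subsetI)
    fix w assume "w \<in> disc_neighbourhood e"
    then obtain p \<zeta> where "p \<in> disc_params e" "norm \<zeta> \<le> 1" "w = disc_family p \<zeta>"
      by (auto simp: disc_neighbourhood_def)
    then show "w \<in> (\<Union>\<zeta>\<in>ball 0 1. (\<lambda>p. disc_family p \<zeta>) ` disc_params e)"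
      by (metis disc_family_attained_inside UN_I image_eqI mem_ball_0)
  next
    fix w assume "w \<in> (\<Union>\<zeta>\<in>ball 0 1. (\<lambda>p. disc_family p \<zeta>) ` disc_params e)"
    then obtain p \<zeta> where "p \<in> disc_params e" "norm \<zeta> < 1" "w = disc_family p \<zeta>"
      by auto
    then show "w \<in> disc_neighbourhood e"
      unfolding disc_neighbourhood_def by (intro UN_I[of p] image_eqI[of w _ \<zeta>]) simp_all
  qed
  then show ?thesis
    by (simp add: open_UN open_disc_family_image)
qed

lemma disc_neighbourhood_subset_ball: "disc_neighbourhood e \<subseteq> ball 0 (2 * e)"
proof
  fix w assume "w \<in> disc_neighbourhood e"
  then obtain p \<zeta> where "p \<in> disc_params e" "norm \<zeta> \<le> 1" "w = disc_family p \<zeta>"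
    by (auto simp: disc_neighbourhood_def)
  then show "w \<in> ball 0 (2 * e)"
    using norm_disc_family_less[of p e \<zeta>] by simp
qed

lemma zero_in_disc_params: "e > 0 \<Longrightarrow> 0 \<in> disc_params e"
  by (simp add: disc_params_def norm1_def zero_prod_def)

lemma zero_in_disc_neighbourhood: "e > 0 \<Longrightarrow> 0 \<in> disc_neighbourhood e"
  unfolding disc_neighbourhood_def by (intro UN_I[of 0] image_eqI[of 0 _ 0] zero_in_disc_params) simp_all

lemma filled_by_contracting_discs_disc_neighbourhood:
  assumes "e > 0"
  shows "filled_by_contracting_discs (disc_neighbourhood e) (Pi1 \<union> Pi2)"
proof -
  have "path_connected (disc_params e)"
    unfolding disc_params_def by (intro convex_imp_path_connected convex_Times convex_norm1_less)
  then show ?thesis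
    unfolding filled_by_contracting_discs_def disc_neighbourhood_def
    using zero_in_disc_params[OF assms]
    by (intro exI[of _ "disc_params e"] exI[of _ disc_family] exI[of _ 0])
      (simp add: continuous_on_disc_family holo_disc_disc_family disc_family_sphere_subset)
qed

lemma Fmap_vimage_Gamma: "Fmap -` Gamma = Pi1 \<union> Pi2"
proof (intro set_eqI)
  fix w :: "complex \<times> complex"
  have "(csqrt ((snd w)\<^sup>2))\<^sup>2 = (snd w)\<^sup>2"
    by simp
  then have "csqrt ((snd w)\<^sup>2) = snd w \<or> csqrt ((snd w)\<^sup>2) = - snd w"
    by (simp only: power2_eq_iff)
  then show "w \<in> Fmap -` Gamma \<longleftrightarrow> w \<in> Pi1 \<union> Pi2"
    by (auto simp: Fmap_def Gamma_def Pi1_def Pi2_def simp del: csqrt.sel)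
qed

theorem mainTheorem9:
  shows "Fmap -` Gamma = Pi1 \<union> Pi2
    \<and> (\<forall>U. open U \<and> (0 :: complex \<times> complex) \<in> U \<longrightarrow>
          (\<exists>V. open V \<and> 0 \<in> V \<and> V \<subseteq> U \<and> filled_by_contracting_discs V (Pi1 \<union> Pi2)))"
proof (intro conjI allI impI)
  show "Fmap -` Gamma = Pi1 \<union> Pi2"
    by (rule Fmap_vimage_Gamma)
  fix U :: "(complex \<times> complex) set"
  assume "open U \<and> 0 \<in> U"
  then obtain d where "d > 0" "ball 0 d \<subseteq> U"
    by (meson openE)
  then have "disc_neighbourhood (d / 2) \<subseteq> U"
    using disc_neighbourhood_subset_ball[of "d / 2"] by simp
  then show "\<exists>V. open V \<and> 0 \<in> V \<and> V \<subseteq> U \<and> filled_by_contracting_discs V (Pi1 \<union> Pi2)"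
    using \<open>d > 0\<close> open_disc_neighbourhood zero_in_disc_neighbourhood
      filled_by_contracting_discs_disc_neighbourhood
    by (intro exI[of _ "disc_neighbourhood (d / 2)"]) simp
qed

end
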